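(* Consider the query incentive model on a deterministic chain (every node has exactly one child), with root at position $0$ and agents at positions $1,2,3,\dots$, where each agent independently holds an answer with probability $p=1/n$, and let $h\ge 1$ be the desired level to which the root wants to propagate the query. Then there exists a sybil-proof direct referral incentive mechanism whose expected cost is $O(nh^2)$.
   Context: Model. The root issues a query which is propagated down the chain. An oblivious reward scheme on the chain is a function $r(i,s)$ ($i\ge1$, $s\ge0$, $i+s\le h$): if the first answer in the chain is at position $i+s\le h$, then the agent at position $i$ receives $r(i,s)$ (so $r(i,0)$ is the reward of the answer holder); if no agent among positions $1,\dots,h$ holds an answer, nobody is paid. A direct referral (DR) mechanism is one in which $r(i,s)=1$ whenever $s\notin\{0,1\}$, i.e. only the first answer holder and its direct parent may receive more than one unit. The expected cost is $\mathbb{E}[\sum_{i=1}^{J} r(i,J-i)]$, where $J$ is the position of the first answer if $J\le h$ (and the sum is empty otherwise). Sybil attacks. An agent may create fake identities: if it holds no answer it may insert $k\ge0$ additional identities between itself and its successor (so its identities occupy $k+1$ consecutive positions and all later agents are shifted down by $k$); if it holds an answer it may create a chain of identities and place its answer at any of them. The payoff of an agent is the expected total reward collected by all of its identities, conditioned on its own answer status and on the event that no earlier agent holds an answer. The mechanism is sybil-proof (with level $h$) if the following profile is a Nash equilibrium: every agent at position $<h$ without an answer propagates the query and creates no sybil; every agent holding an answer reports it without creating sybils and does not propagate; the agent at position $h$ reports its answer if it has one and does not propagate; all agents forward the selected answer. *)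

theory Defs
  imports Complex_Main
begin

text \<open>Oblivious reward schemes on a chain: r i s is the reward of the agent at
position i when the first answer is at position i + s (meaningful for
1 <= i and i + s <= h).\<close>

definition reward_scheme :: "(nat \<Rightarrow> nat \<Rightarrow> real) \<Rightarrow> nat \<Rightarrow> bool" where
  "reward_scheme r h \<longleftrightarrow> (\<forall>i s. 1 \<le> i \<and> i + s \<le> h \<longrightarrow> 0 \<le> r i s)"

definition direct_referral :: "(nat \<Rightarrow> nat \<Rightarrow> real) \<Rightarrow> nat \<Rightarrow> bool" where
  "direct_referral r h \<longleftrightarrow>
     (\<forall>i s. 1 \<le> i \<and> i + s \<le> h \<and> s \<noteq> 0 \<and> s \<noteq> 1 \<longrightarrow> r i s = 1)"

text \<open>Expected cost: J = position of first answer, P(J = j) = (1-p)^(j-1) p.\<close>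
definition expected_cost :: "(nat \<Rightarrow> nat \<Rightarrow> real) \<Rightarrow> real \<Rightarrow> nat \<Rightarrow> real" where
  "expected_cost r p h =
     (\<Sum>j=1..h. (1 - p) ^ (j - 1) * p * (\<Sum>i=1..j. r i (j - i)))"

text \<open>Expected payoff of the agent at position i (all earlier agents without
answer) which propagates the query after creating k extra identities
(occupying positions i..i+k), while it does not report an answer itself and all
later agents follow the prescribed profile: the first later answer holder is the
m-th agent after it (probability (1-p)^(m-1) p), located at position i+k+m,
and this only pays if i+k+m <= h.\<close>
definition prop_payoff :: "(nat \<Rightarrow> nat \<Rightarrow> real) \<Rightarrow> real \<Rightarrow> nat \<Rightarrow> nat \<Rightarrow> nat \<Rightarrow> real" where
  "prop_payoff r p h i k =
     (\<Sum>m=1..h - (i + k). (1 - p) ^ (m - 1) * p * (\<Sum>t\<le>k. r (i + t) (k + m - t)))"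

text \<open>Payoff of an answer holder at position i that creates a chain of
identities at positions i..i+k and places its answer at position i+k.\<close>
definition report_payoff :: "(nat \<Rightarrow> nat \<Rightarrow> real) \<Rightarrow> nat \<Rightarrow> nat \<Rightarrow> real" where
  "report_payoff r i k = (\<Sum>t\<le>k. r (i + t) (k - t))"

text \<open>Sybil-proofness (level h): the prescribed profile is a Nash equilibrium.
For each position i in 1..h, conditioned on no earlier answer:
 - without an answer (i < h): propagating with no sybil is at least as good as
   propagating with k sybils, and as not propagating (payoff 0);
 - with an answer: reporting at its own position (payoff r i 0) is at least as
   good as reporting behind k sybils (i+k <= h; answers placed beyond level h
   yield 0), as not reporting and propagating with k sybils, and as doing
   nothing (payoff 0).\<close>
definition sybil_proof :: "(nat \<Rightarrow> nat \<Rightarrow> real) \<Rightarrow> real \<Rightarrow> nat \<Rightarrow> bool" where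
  "sybil_proof r p h \<longleftrightarrow>
     (\<forall>i. 1 \<le> i \<and> i \<le> h \<longrightarrow>
        (i < h \<longrightarrow> (\<forall>k. prop_payoff r p h i k \<le> prop_payoff r p h i 0)
                   \<and> 0 \<le> prop_payoff r p h i 0)
      \<and> (\<forall>k. i + k \<le> h \<longrightarrow> report_payoff r i k \<le> r i 0)
      \<and> (\<forall>k. prop_payoff r p h i k \<le> r i 0)
      \<and> 0 \<le> r i 0)"

end

theory Submission
  imports Defs
begin

text \<open>The mechanism pays 1 to every referrer more than one step above the answer
holder; the direct parent of an answer holder at depth d = h - i below the
level gets c d, and the answer holder itself gets c d (d + 1) / 2 + d.
Take c = 2 n + 1, so that p c = 2 + p for p = 1 / n.

Sybils do not pay: an agent without an answer that inserts k \<ge> 1 fake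
identities gains at most k + 1 extra unit rewards, but with probability p it
loses the parent bonus c k, which outweighs that gain since p c k \<ge> (2 + p) k.
An answer holder hiding behind k fake identities collects k - 1 units, one
parent bonus and the holder reward of a deeper position, and the quadratic
holder reward is chosen exactly so that this never beats reporting directly.
Finally, whatever happens the rewards paid along the chain form a report payoff
of the first agent, so sybil-proofness itself bounds the expected cost by the
holder reward at position 1, which is O(n h^2).\<close>

lemma sum_geometric_weights:
  "(\<Sum>m=1..N. (1 - p) ^ (m - 1) * (p::real)) = 1 - (1 - p) ^ N"
  by (induction N) (simp_all add: algebra_simps)

lemma sum_geometric_weights_le:
  fixes p B :: real
  assumes p: "0 \<le> p" "p \<le> 1" and A: "A \<subseteq> {1..N}"
    and f: "\<And>m. m \<in> A \<Longrightarrow> f m \<le> B" and B: "0 \<le> B"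
  shows "(\<Sum>m\<in>A. (1 - p) ^ (m - 1) * p * f m) \<le> B"
proof -
  have "(\<Sum>m\<in>A. (1 - p) ^ (m - 1) * p * f m) \<le> (\<Sum>m\<in>A. (1 - p) ^ (m - 1) * p * B)"
    using p f by (intro sum_mono mult_left_mono) auto
  also have "\<dots> = (\<Sum>m\<in>A. (1 - p) ^ (m - 1) * p) * B"
    by (simp add: sum_distrib_right)
  also have "\<dots> \<le> (\<Sum>m=1..N. (1 - p) ^ (m - 1) * p) * B"
    using p A B by (intro mult_right_mono sum_mono2) auto
  also have "\<dots> = (1 - (1 - p) ^ N) * B"
    by (simp only: sum_geometric_weights)
  also have "\<dots> \<le> B"
    using p B by (intro mult_left_le_one_le) (simp_all add: power_le_one)
  finally show ?thesis .
qed

lemma prop_payoff_nonneg: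
  assumes "reward_scheme r h" "1 \<le> i" "0 \<le> p" "p \<le> 1"
  shows "0 \<le> prop_payoff r p h i k"
  using assms unfolding prop_payoff_def reward_scheme_def
  by (intro sum_nonneg mult_nonneg_nonneg) auto

lemma sum_direct_referral_chain:
  assumes r: "direct_referral r h" and "1 \<le> i" "1 \<le> m" "i + k + m \<le> h"
  shows "(\<Sum>t\<le>k. r (i + t) (k + m - t)) = real k + r (i + k) m"
proof -
  have "(\<Sum>t<k. r (i + t) (k + m - t)) = (\<Sum>t<k. 1)"
    using r assms unfolding direct_referral_def by (intro sum.cong) auto
  then show ?thesis by (simp flip: lessThan_Suc_atMost)
qed

lemma prop_payoff_direct_referral:
  assumes "direct_referral r h" "1 \<le> i"
  shows "prop_payoff r p h i k =
    (\<Sum>m=1..h - (i + k). (1 - p) ^ (m - 1) * p * (real k + r (i + k) m))"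
  unfolding prop_payoff_def using assms by (intro sum.cong) (auto simp: sum_direct_referral_chain)

lemma report_payoff_direct_referral:
  assumes "direct_referral r h" "1 \<le> i" "i + Suc k \<le> h"
  shows "report_payoff r i (Suc k) = real k + r (i + k) 1 + r (i + Suc k) 0"
  using sum_direct_referral_chain[OF assms(1,2), of 1 k] assms(3)
  by (simp add: report_payoff_def)

lemma expected_cost_eq_sum_report_payoff:
  "expected_cost r p h = (\<Sum>j=1..h. (1 - p) ^ (j - 1) * p * report_payoff r 1 (j - 1))"
proof -
  have "(\<Sum>i=1..j. r i (j - i)) = report_payoff r 1 (j - 1)" if "1 \<le> j" for j
  proof -
    have "(\<Sum>i=1..j. r i (j - i)) = (\<Sum>i=0 + 1..(j - 1) + 1. r i (j - i))"
      using that by simp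
    also have "\<dots> = (\<Sum>t=0..j - 1. r (t + 1) (j - (t + 1)))"
      by (rule sum.shift_bounds_cl_nat_ivl)
    finally show ?thesis
      by (simp add: report_payoff_def atMost_atLeast0)
  qed
  then show ?thesis unfolding expected_cost_def by (intro sum.cong) auto
qed

lemma expected_cost_le_top_reward:
  assumes "sybil_proof r p h" "1 \<le> h" "0 \<le> p" "p \<le> 1"
  shows "expected_cost r p h \<le> r 1 0"
proof -
  have report: "report_payoff r 1 k \<le> r 1 0" if "1 + k \<le> h" for k
    using assms(1,2) that unfolding sybil_proof_def by blast
  have "0 \<le> r 1 0"
    using assms(1,2) unfolding sybil_proof_def by blast
  then show ?thesis
    unfolding expected_cost_eq_sum_report_payoff
    using assms(3,4) report by (intro sum_geometric_weights_le) auto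
qed

definition referral_reward :: "real \<Rightarrow> nat \<Rightarrow> nat \<Rightarrow> nat \<Rightarrow> real" where
  "referral_reward c h i s =
     (if s = 0 then c * real (h - i) * (real (h - i) + 1) / 2 + real (h - i)
      else if s = 1 then c * real (h - i) else 1)"

lemma referral_reward_nonneg: "0 \<le> c \<Longrightarrow> 0 \<le> referral_reward c h i s"
  by (simp add: referral_reward_def)

lemma reward_scheme_referral_reward: "0 \<le> c \<Longrightarrow> reward_scheme (referral_reward c h) h"
  by (simp add: reward_scheme_def referral_reward_nonneg)

lemma direct_referral_referral_reward: "direct_referral (referral_reward c h) h"
  by (simp add: direct_referral_def referral_reward_def)

lemma prop_payoff_referral_reward_ge:
  assumes "0 \<le> p" "p \<le> 1" "0 \<le> c" "i < h"
  shows "p * (c * real (h - i)) \<le> prop_payoff (referral_reward c h) p h i 0"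
proof -
  have "p * (c * real (h - i)) = (1 - p) ^ (1 - 1) * p * referral_reward c h i 1"
    by (simp add: referral_reward_def)
  also have "\<dots> \<le> (\<Sum>m=1..h - i. (1 - p) ^ (m - 1) * p * referral_reward c h i m)"
    using assms by (intro member_le_sum mult_nonneg_nonneg referral_reward_nonneg) auto
  finally show ?thesis by (simp add: prop_payoff_def)
qed

lemma prop_payoff_referral_reward_le:
  assumes p: "0 \<le> p" "p \<le> 1" and "0 \<le> c" "1 \<le> i" "i + k < h"
  shows "prop_payoff (referral_reward c h) p h i k
           \<le> p * (real k + c * real (h - (i + k))) + (real k + 1)"
proof -
  define N where "N = h - (i + k)"
  have split: "{1..N} = insert 1 {2..N}" using assms by (auto simp: N_def)
  have tail: "(\<Sum>m\<in>{2..N}. (1 - p) ^ (m - 1) * p * (real k + referral_reward c h (i + k) m))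
                \<le> real k + 1"
    using p by (intro sum_geometric_weights_le) (auto simp: referral_reward_def)
  have "prop_payoff (referral_reward c h) p h i k
          = (\<Sum>m\<in>insert 1 {2..N}. (1 - p) ^ (m - 1) * p * (real k + referral_reward c h (i + k) m))"
    unfolding prop_payoff_direct_referral[OF direct_referral_referral_reward assms(4)] N_def[symmetric] split ..
  also have "\<dots> = p * (real k + c * real N)
      + (\<Sum>m\<in>{2..N}. (1 - p) ^ (m - 1) * p * (real k + referral_reward c h (i + k) m))"
    by (simp add: referral_reward_def N_def)
  finally show ?thesis using tail by (simp add: N_def)
qed

lemma prop_payoff_referral_reward_le_no_sybil:
  assumes p: "0 < p" "p \<le> 1" and c: "p + 2 \<le> p * c" and "1 \<le> i" "i < h"
  shows "prop_payoff (referral_reward c h) p h i k \<le> prop_payoff (referral_reward c h) p h i 0"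
proof -
  have "0 \<le> p" "0 \<le> c" using p c by (smt (verit) mult_nonneg_nonpos)+
  consider "k = 0" | "1 \<le> k" "i + k < h" | "h \<le> i + k" by linarith
  then show ?thesis
  proof cases
    case 1
    then show ?thesis by simp
  next
    case 2
    have gain: "(p + 2) * real k \<le> p * c * real k" using c by (simp add: mult_right_mono)
    have "real (h - (i + k)) = real (h - i) - real k" using 2 by simp
    then have "p * (real k + c * real (h - (i + k))) + (real k + 1) \<le> p * (c * real (h - i))"
      using gain 2 by (simp add: algebra_simps)
    then show ?thesis
      using prop_payoff_referral_reward_le[OF \<open>0 \<le> p\<close> p(2) \<open>0 \<le> c\<close> \<open>1 \<le> i\<close> 2(2)]
        prop_payoff_referral_reward_ge[OF \<open>0 \<le> p\<close> p(2) \<open>0 \<le> c\<close> \<open>i < h\<close>]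
      by linarith
  next
    case 3
    then have "prop_payoff (referral_reward c h) p h i k = 0" by (simp add: prop_payoff_def)
    then show ?thesis
      using prop_payoff_nonneg reward_scheme_referral_reward \<open>0 \<le> c\<close> \<open>1 \<le> i\<close> p by simp
  qed
qed

lemma report_payoff_referral_reward_le:
  assumes c: "0 \<le> c" and "1 \<le> i" "i + k \<le> h"
  shows "report_payoff (referral_reward c h) i k \<le> referral_reward c h i 0"
proof (cases k)
  case 0
  then show ?thesis by (simp add: report_payoff_def)
next
  case (Suc k')
  define d where "d = real (h - i)"
  have d1: "real (h - (i + k')) = d - real k'" and d2: "real (h - Suc (i + k')) = d - real k' - 1"
    using assms Suc by (auto simp: d_def)
  have "0 \<le> c * (real k' * (2 * d - real k' + 1))"
    using assms Suc by (intro mult_nonneg_nonneg) (auto simp: d_def)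
  then have "real k' + c * (d - real k') + (c * (d - real k' - 1) * (d - real k') / 2 + (d - real k' - 1))
               \<le> c * d * (d + 1) / 2 + d"
    by (simp add: field_simps)
  moreover have "report_payoff (referral_reward c h) i k
      = real k' + referral_reward c h (i + k') 1 + referral_reward c h (i + Suc k') 0"
    using report_payoff_direct_referral[OF direct_referral_referral_reward] assms Suc by simp
  ultimately show ?thesis by (simp add: referral_reward_def d1 d2 flip: d_def)
qed

lemma prop_payoff_referral_reward_le_report:
  assumes p: "0 < p" "p \<le> 1" and c: "p + 2 \<le> p * c" and "1 \<le> i"
  shows "prop_payoff (referral_reward c h) p h i k \<le> referral_reward c h i 0"
proof (cases "i < h")
  case False
  then show ?thesis by (simp add: prop_payoff_def referral_reward_def)
next
  case True
  have "0 \<le> c" using p c by (smt (verit) mult_nonneg_nonpos)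
  have "prop_payoff (referral_reward c h) p h i 0
          = (\<Sum>m=1..h - i. (1 - p) ^ (m - 1) * p * referral_reward c h i m)"
    by (simp add: prop_payoff_def)
  also have "\<dots> \<le> c * real (h - i) + 1"
    using p \<open>0 \<le> c\<close> by (intro sum_geometric_weights_le) (auto simp: referral_reward_def)
  also have "\<dots> \<le> referral_reward c h i 0"
  proof -
    have "c * real (h - i) * 1 \<le> c * real (h - i) * ((real (h - i) + 1) / 2)"
      using True \<open>0 \<le> c\<close> by (intro mult_left_mono) auto
    then show ?thesis using True by (simp add: referral_reward_def)
  qed
  finally show ?thesis
    using prop_payoff_referral_reward_le_no_sybil[OF p c \<open>1 \<le> i\<close> True, of k] by linarith
qed

lemma referral_reward_holder_le:
  assumes "0 \<le> c" "1 \<le> i"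
  shows "referral_reward c h i 0 \<le> (c / 2 + 1) * real h ^ 2"
proof (cases "i < h")
  case False
  then show ?thesis using assms by (simp add: referral_reward_def)
next
  case True
  define d where "d = real (h - i)"
  have d: "0 \<le> d" "d + 1 \<le> real h" using True assms(2) by (auto simp: d_def)
  have "referral_reward c h i 0 = c * (d * (d + 1)) / 2 + d"
    by (simp add: referral_reward_def d_def)
  moreover have "c * (d * (d + 1)) \<le> c * (real h * real h)"
    using d assms(1) by (intro mult_mono mult_left_mono) auto
  moreover have "real h \<le> real h * real h"
    using d by (simp add: mult_le_cancel_left1)
  moreover have "(c / 2 + 1) * real h ^ 2 = c * (real h * real h) / 2 + real h * real h"
    by (simp add: power2_eq_square algebra_simps)
  ultimately show ?thesis using d by linarith
qed

lemma sybil_proof_referral_reward: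
  assumes p: "0 < p" "p \<le> 1" and c: "p + 2 \<le> p * c"
  shows "sybil_proof (referral_reward c h) p h"
proof -
  have "0 \<le> c" using p c by (smt (verit) mult_nonneg_nonpos)
  then show ?thesis
    unfolding sybil_proof_def
    using p prop_payoff_referral_reward_le_no_sybil[OF p c] prop_payoff_nonneg
      reward_scheme_referral_reward report_payoff_referral_reward_le
      prop_payoff_referral_reward_le_report[OF p c] referral_reward_nonneg
    by auto
qed

theorem theorem1p1:
  shows "\<exists>C::real. C > 0 \<and>
    (\<forall>(n::nat) (h::nat). 1 \<le> n \<longrightarrow> 1 \<le> h \<longrightarrow>
      (\<exists>r. reward_scheme r h \<and> direct_referral r h \<and> sybil_proof r (1 / real n) h \<and>
           expected_cost r (1 / real n) h \<le> C * real n * real h ^ 2))"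
proof (intro exI[of _ 3] conjI allI impI)
  fix n h :: nat
  assume n: "1 \<le> n" and h: "1 \<le> h"
  define p where "p = 1 / real n"
  define c where "c = 2 * real n + 1"
  have p: "0 < p" "p \<le> 1" and c: "p + 2 \<le> p * c" and "0 \<le> c"
    using n by (auto simp: p_def c_def field_simps)
  have sp: "sybil_proof (referral_reward c h) p h"
    by (rule sybil_proof_referral_reward[OF p c])
  have "expected_cost (referral_reward c h) p h \<le> referral_reward c h 1 0"
    using expected_cost_le_top_reward[OF sp h] p by simp
  also have "\<dots> \<le> (c / 2 + 1) * real h ^ 2"
    using referral_reward_holder_le[OF \<open>0 \<le> c\<close>] by simp
  also have "\<dots> = real n * real h ^ 2 + 3 / 2 * real h ^ 2"
    by (simp add: c_def field_simps)
  also have "\<dots> \<le> 3 * real n * real h ^ 2"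
    using n mult_right_mono[of 1 "real n" "real h ^ 2"] zero_le_power2[of "real h"] by linarith
  finally show "\<exists>r. reward_scheme r h \<and> direct_referral r h \<and> sybil_proof r (1 / real n) h \<and>
      expected_cost r (1 / real n) h \<le> 3 * real n * real h ^ 2"
    using sp reward_scheme_referral_reward[OF \<open>0 \<le> c\<close>] direct_referral_referral_reward
    unfolding p_def by blast
qed simp

end
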